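(* Let $n\in\mathbb{Z}_{++}$, let $G=[g_{ij}]\in\mathbb{R}_+^{n\times n}$ be an entrywise nonnegative matrix, and let $\alpha,p\in\mathbb{R}$ with $\alpha\ge p$, $\beta\in[0,1)$ and $\delta\in(0,1)$. Assume the spectral radius of $G$ satisfies $\rho(G)\le \Lambda_{\max}$ for some $0<\Lambda_{\max}<\frac{1}{\delta(1+\beta)}$. For seeding vectors $\bar{\mathbf s},\underline{\mathbf s}\in\mathbb{R}^n_+$ define the sequences $\bar{\mathbf x}(k),\underline{\mathbf x}(k)\in\mathbb{R}^n$, $k\in\mathbb{Z}_+$, by $\bar{\mathbf x}(0)=\bar{\mathbf s}$, $\underline{\mathbf x}(0)=\underline{\mathbf s}$ and $$\bar{\mathbf x}(k+1)=(\alpha-p)\mathbf 1_n+G\bar{\mathbf x}(k)+\beta G\underline{\mathbf x}(k),\qquad \underline{\mathbf x}(k+1)=(\alpha-p)\mathbf 1_n+G\underline{\mathbf x}(k)+\beta G\bar{\mathbf x}(k),$$ and define the utilities $$\bar{\mathfrak U}(\bar{\mathbf s},\underline{\mathbf s})=p\sum_{k=0}^{\infty}\delta^k\mathbf 1_n^\top\bar{\mathbf x}(k)-\tfrac12\|\bar{\mathbf s}\|_2^2,\qquad \underline{\mathfrak U}(\bar{\mathbf s},\underline{\mathbf s})=p\sum_{k=0}^{\infty}\delta^k\mathbf 1_n^\top\underline{\mathbf x}(k)-\tfrac12\|\underline{\mathbf s}\|_2^2.$$ Let $\mathbf c=[c_1,\dots,c_n]^\top=\tfrac12\big(I_n-\delta(1-\beta)G^\top\big)^{-1}\mathbf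 1_n+\tfrac12\big(I_n-\delta(1+\beta)G^\top\big)^{-1}\mathbf 1_n$. Then for every $i\in[n]$, $$\frac{\partial\bar{\mathfrak U}}{\partial\bar s_i}=p\,c_i-\bar s_i,\qquad \frac{\partial\underline{\mathfrak U}}{\partial\underline s_i}=p\,c_i-\underline s_i.$$
   Context: $\mathbf 1_n$ is the all-ones vector in $\mathbb{R}^n$, $[n]=\{1,\dots,n\}$. The vector $(I_n-aG^\top)^{-1}\mathbf 1_n$ is the Katz–Bonacich centrality of $G$ with attenuation factor $a$. Interpretation: $\bar x_i(k)$ and $\underline x_i(k)$ are agent $i$'s consumption of the products of firm $a$ and firm $b$ at time $k$, and $\bar{\mathbf s},\underline{\mathbf s}$ are the two firms' seedings. *)

theory Defs
  imports "HOL-Analysis.Analysis"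
begin

definition cmat :: "real^'n^'n \<Rightarrow> complex^'n^'n" where
  "cmat G = (\<chi> i j. complex_of_real (G $ i $ j))"

definition eigenvalues :: "real^'n^'n \<Rightarrow> complex set" where
  "eigenvalues G = {l. \<exists>v::complex^'n. v \<noteq> 0 \<and> cmat G *v v = l *s v}"

definition spectral_radius :: "real^'n^'n \<Rightarrow> real" where
  "spectral_radius G = Sup (cmod ` eigenvalues G)"

definition ones :: "real^'n" where
  "ones = (\<chi> i. 1)"

fun traj :: "real^'n^'n \<Rightarrow> real \<Rightarrow> real \<Rightarrow> real \<Rightarrow> real^'n \<Rightarrow> real^'n \<Rightarrow> nat
             \<Rightarrow> (real^'n) \<times> (real^'n)" where
  "traj G \<alpha> p \<beta> sb su 0 = (sb, su)"
| "traj G \<alpha> p \<beta> sb su (Suc k) =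
     (let xb = fst (traj G \<alpha> p \<beta> sb su k); xu = snd (traj G \<alpha> p \<beta> sb su k) in
      ((\<alpha> - p) *\<^sub>R ones + G *v xb + \<beta> *\<^sub>R (G *v xu),
       (\<alpha> - p) *\<^sub>R ones + G *v xu + \<beta> *\<^sub>R (G *v xb)))"

definition xbar where "xbar G \<alpha> p \<beta> sb su k = fst (traj G \<alpha> p \<beta> sb su k)"
definition xund where "xund G \<alpha> p \<beta> sb su k = snd (traj G \<alpha> p \<beta> sb su k)"

definition Ubar :: "real^'n^'n \<Rightarrow> real \<Rightarrow> real \<Rightarrow> real \<Rightarrow> real \<Rightarrow> real^'n \<Rightarrow> real^'n \<Rightarrow> real" where
  "Ubar G \<alpha> p \<beta> \<delta> sb su =
     p * (\<Sum>k. \<delta> ^ k * (ones \<bullet> xbar G \<alpha> p \<beta> sb su k)) - (1/2) * (norm sb)\<^sup>2"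

definition Uund :: "real^'n^'n \<Rightarrow> real \<Rightarrow> real \<Rightarrow> real \<Rightarrow> real \<Rightarrow> real^'n \<Rightarrow> real^'n \<Rightarrow> real" where
  "Uund G \<alpha> p \<beta> \<delta> sb su =
     p * (\<Sum>k. \<delta> ^ k * (ones \<bullet> xund G \<alpha> p \<beta> sb su k)) - (1/2) * (norm su)\<^sup>2"

definition cvec :: "real^'n^'n \<Rightarrow> real \<Rightarrow> real \<Rightarrow> real^'n" where
  "cvec G \<beta> \<delta> =
     (1/2) *\<^sub>R (matrix_inv (mat 1 - (\<delta> * (1 - \<beta>)) *\<^sub>R transpose G) *v ones)
   + (1/2) *\<^sub>R (matrix_inv (mat 1 - (\<delta> * (1 + \<beta>)) *\<^sub>R transpose G) *v ones)"

end

(* Write M+ = delta (1 + beta) G and M- = delta (1 - beta) G.  Discounting by delta^k, the sum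
   xbar(k) + xund(k) obeys a linear recurrence with matrix M+ and constant forcing, and the
   difference xbar(k) - xund(k) the homogeneous recurrence with matrix M-.  The bound on the
   spectral radius makes the powers of both matrices decay geometrically (via the Jordan normal
   form), so every series converges absolutely, and the Neumann series
   sum_k 1^T M^k v = ((I - M^T)^-1 1)^T v shows that the discounted consumption of firm a equals
   c^T sbar plus a term independent of sbar.  Hence Ubar is p c^T sbar - |sbar|^2/2 plus a
   constant in sbar; the dynamics are symmetric under swapping the firms, which gives Uund. *)
theory Submission
  imports Defs Jordan_Normal_Form.Spectral_Radius
begin

no_notation vec_index (infixl "$" 100)
no_notation scalar_prod (infix "\<bullet>" 70)
hide_const (open) Matrix.mat Matrix.vec Matrix.row Matrix.col Spectral_Radius.spectral_radius

section \<open>Matrix powers and exponential stability\<close>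

primrec matpow :: "'a::semiring_1^'n^'n \<Rightarrow> nat \<Rightarrow> 'a^'n^'n" where
  "matpow M 0 = mat 1"
| "matpow M (Suc k) = M ** matpow M k"

lemma matpow_Suc_right: "matpow M (Suc k) = matpow M k ** M"
  by (induction k) (simp_all add: matrix_mul_assoc)

lemma matpow_scaleR: "matpow (c *\<^sub>R M) k = c ^ k *\<^sub>R matpow (M :: real^'n^'n) k"
  by (induction k) (simp_all add: matrix_scalar_ac scalar_matrix_assoc[symmetric])

lemma linear_recurrence_closed_form:
  fixes M :: "real^'n^'n"
  assumes rec: "\<And>k. z (Suc k) = b k + M *v z k"
  shows "z k = matpow M k *v z 0 + (\<Sum>j<k. matpow M (k - Suc j) *v b j)"
proof (induction k)
  case 0
  then show ?case by simp
next
  case (Suc k)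
  have "(\<Sum>j<k. M *v (matpow M (k - Suc j) *v b j)) = (\<Sum>j<k. matpow M (Suc k - Suc j) *v b j)"
  proof (rule sum.cong)
    fix j assume "j \<in> {..<k}"
    then have "Suc k - Suc j = Suc (k - Suc j)" by simp
    then show "M *v (matpow M (k - Suc j) *v b j) = matpow M (Suc k - Suc j) *v b j"
      by (simp add: matrix_vector_mul_assoc)
  qed simp
  then show ?case
    using Suc
    by (simp add: rec matrix_vector_right_distrib linear_sum[OF matrix_vector_mul_linear]
        matrix_vector_mul_assoc add.assoc)
qed

definition exp_stable :: "real^'n^'n \<Rightarrow> bool" where
  "exp_stable M \<longleftrightarrow>
     (\<exists>C q. 0 \<le> C \<and> 0 \<le> q \<and> q < 1 \<and> (\<forall>k v. norm (matpow M k *v v) \<le> C * q ^ k * norm v))"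

lemma exp_stable_tendsto_zero:
  assumes "exp_stable M"
  shows "(\<lambda>k. matpow M k *v v) \<longlonglongrightarrow> 0"
proof -
  obtain C q where q: "0 \<le> q" "q < 1" and bound: "\<And>k. norm (matpow M k *v v) \<le> C * q ^ k * norm v"
    using assms unfolding exp_stable_def by blast
  have "(\<lambda>k. q ^ k) \<longlonglongrightarrow> 0"
    using q by (simp add: LIMSEQ_power_zero)
  then have lim: "(\<lambda>k. q ^ k * (C * norm v)) \<longlonglongrightarrow> 0"
    by (rule tendsto_mult_left_zero)
  have "\<forall>k. norm (matpow M k *v v) \<le> q ^ k * (C * norm v)"
    using bound by (simp add: mult_ac)
  from Lim_null_comparison[OF always_eventually[OF this] lim] show ?thesis .
qed

lemma exp_stable_invertible:
  assumes "exp_stable M"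
  shows "invertible (mat 1 - M)"
proof -
  have "inj ((*v) (mat 1 - M))"
  proof (rule injI)
    fix x y
    assume "(mat 1 - M) *v x = (mat 1 - M) *v y"
    define d where "d = x - y"
    then have "(mat 1 - M) *v d = 0"
      using \<open>(mat 1 - M) *v x = _\<close> by (simp add: matrix_vector_mult_diff_distrib)
    then have fixed: "M *v d = d"
      by (simp add: matrix_vector_mult_diff_rdistrib)
    have "matpow M k *v d = d" for k
      by (induction k) (simp_all add: matrix_vector_mul_assoc[symmetric] fixed)
    then show "x = y"
      using exp_stable_tendsto_zero[OF assms, of d] by (simp add: LIMSEQ_const_iff d_def)
  qed
  then show ?thesis
    by (simp add: invertible_left_inverse matrix_left_invertible_injective)
qed

lemma exp_stable_neumann_sums:
  assumes "exp_stable M"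
  shows "(\<lambda>k. u \<bullet> (matpow M k *v v)) sums ((matrix_inv (mat 1 - transpose M) *v u) \<bullet> v)"
proof -
  have "transpose (mat 1 - M) = mat 1 - transpose M"
    by (simp add: transpose_def Finite_Cartesian_Product.mat_def
        Finite_Cartesian_Product.vec_eq_iff)
  then have "invertible (mat 1 - transpose M)"
    by (metis exp_stable_invertible[OF assms] transpose_invertible)
  then have "(mat 1 - transpose M) ** matrix_inv (mat 1 - transpose M) = mat 1"
    unfolding invertible_def matrix_inv_def by (rule someI_ex[THEN conjunct1])
  define y where "y = matrix_inv (mat 1 - transpose M) *v u"
  have "(mat 1 - transpose M) *v y = u"
    unfolding y_def matrix_vector_mul_assoc \<open>_ ** _ = mat 1\<close> by simp
  then have y: "y - y v* M = u"
    by (simp add: matrix_vector_mult_diff_rdistrib)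
  define h where "h k = y \<bullet> (matpow M k *v v)" for k
  have "u \<bullet> (matpow M k *v v) = h k - h (Suc k)" for k
    unfolding h_def y[symmetric]
    by (simp add: inner_diff_left dot_lmul_matrix matrix_vector_mul_assoc[symmetric])
  moreover have "h \<longlonglongrightarrow> 0"
    unfolding h_def using tendsto_inner[OF tendsto_const exp_stable_tendsto_zero[OF assms]] by simp
  ultimately show ?thesis
    using telescope_sums'[of h 0] by (simp add: h_def y_def)
qed

lemma summable_Suc_mult_power:
  fixes r :: real
  assumes "0 \<le> r" "r < 1"
  shows "summable (\<lambda>k. real (Suc k) * r ^ k)"
  using termdiff_converges[of r 1 "\<lambda>_. 1"] assms by (simp add: diffs_def summable_geometric)

lemma exp_stable_forced_summable:
  assumes "exp_stable M" and rec: "\<And>k. z (Suc k) = b k + M *v z k"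
    and forcing: "\<And>k. norm (b k) \<le> B * d ^ Suc k" and d: "0 \<le> d" "d < 1"
  shows "summable (\<lambda>k. norm (z k))"
proof -
  obtain C q where C: "0 \<le> C" and q: "0 \<le> q" "q < 1"
    and decay: "\<And>k v. norm (matpow M k *v v) \<le> C * q ^ k * norm v"
    using assms(1) unfolding exp_stable_def by blast
  define r where "r = max q d"
  have r: "0 \<le> r" "r < 1" "q \<le> r" "d \<le> r"
    using q d by (auto simp: r_def)
  have decay_r: "norm (matpow M k *v v) \<le> C * r ^ k * norm v" for k v
    using decay[of k v] mult_left_mono[OF power_mono[OF \<open>q \<le> r\<close> q(1)] C, of k]
    by (meson mult_right_mono norm_ge_zero order_trans)
  have forcing_r: "norm (b j) \<le> \<bar>B\<bar> * r ^ Suc j" for j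
    using forcing[of j] mult_mono[OF abs_ge_self power_mono[OF \<open>d \<le> r\<close> d(1)]]
    by (meson abs_ge_zero order_trans zero_le_power[OF d(1)])
  have "norm (z k) \<le> C * (norm (z 0) + \<bar>B\<bar>) * (real (Suc k) * r ^ k)" for k
  proof -
    have summand: "norm (matpow M (k - Suc j) *v b j) \<le> C * \<bar>B\<bar> * r ^ k" if "j < k" for j
    proof -
      have "norm (matpow M (k - Suc j) *v b j) \<le> C * r ^ (k - Suc j) * (\<bar>B\<bar> * r ^ Suc j)"
        using decay_r forcing_r C r(1)
        by (meson mult_left_mono order_trans zero_le_mult_iff zero_le_power)
      also have "\<dots> = C * \<bar>B\<bar> * r ^ (k - Suc j + Suc j)"
        by (simp add: power_add)
      finally show ?thesis
        using that by simp
    qed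
    have "norm (z k) \<le> norm (matpow M k *v z 0) + (\<Sum>j<k. norm (matpow M (k - Suc j) *v b j))"
      unfolding linear_recurrence_closed_form[of z b M k, OF rec]
      by (rule order_trans[OF norm_triangle_ineq add_left_mono[OF norm_sum]])
    also have "\<dots> \<le> C * r ^ k * norm (z 0) + (\<Sum>j<k. C * \<bar>B\<bar> * r ^ k)"
      by (intro add_mono decay_r sum_mono summand) simp
    also have "\<dots> \<le> C * (norm (z 0) + \<bar>B\<bar>) * (real (Suc k) * r ^ k)"
      using C r(1) by (simp add: algebra_simps mult_left_mono mult_right_mono)
    finally show ?thesis .
  qed
  then show ?thesis
    by (intro summable_comparison_test[OF _ summable_mult[OF summable_Suc_mult_power[OF r(1,2)]]])
      auto
qed

section \<open>Spectral radius and exponential stability\<close>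

lemma cmat_mult: "cmat (A ** B) = cmat A ** cmat B"
  by (simp add: cmat_def matrix_matrix_mult_def Finite_Cartesian_Product.vec_eq_iff)

lemma cmat_one: "cmat (mat 1) = mat 1"
  by (simp add: cmat_def Finite_Cartesian_Product.mat_def Finite_Cartesian_Product.vec_eq_iff)

lemma cmat_matpow: "cmat (matpow A k) = matpow (cmat A) k"
  by (induction k) (simp_all add: cmat_one cmat_mult)

lemma eigenvalues_scaleR:
  assumes "\<mu> \<in> eigenvalues (s *\<^sub>R G)" "s \<noteq> 0"
  shows "\<mu> / complex_of_real s \<in> eigenvalues G"
proof -
  obtain w where "w \<noteq> 0" "cmat (s *\<^sub>R G) *v w = \<mu> *s w"
    using assms(1) unfolding eigenvalues_def by blast
  moreover have "cmat (s *\<^sub>R G) *v w = complex_of_real s *s (cmat G *v w)"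
    by (simp add: Finite_Cartesian_Product.vec_eq_iff matrix_vector_mult_def cmat_def
        sum_distrib_left mult.assoc)
  ultimately have "w \<noteq> 0" "cmat G *v w = (\<mu> / complex_of_real s) *s w"
    using assms(2) by (auto simp: Finite_Cartesian_Product.vec_eq_iff field_simps)
  then show ?thesis
    unfolding eigenvalues_def by blast
qed

lemma eigenvalue_norm_le_abs_sum:
  assumes "\<mu> \<in> eigenvalues G"
  shows "cmod \<mu> \<le> (\<Sum>i\<in>UNIV. \<Sum>j\<in>UNIV. \<bar>G $ i $ j\<bar>)"
proof -
  obtain v where v: "v \<noteq> 0" "cmat G *v v = \<mu> *s v"
    using assms unfolding eigenvalues_def by auto
  define m where "m = Max (range (\<lambda>j. cmod (v $ j)))"
  have m_ge: "cmod (v $ j) \<le> m" for j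
    unfolding m_def by (rule Max_ge) auto
  have "m \<in> range (\<lambda>j. cmod (v $ j))"
    unfolding m_def by (rule Max_in) auto
  then obtain i where i: "cmod (v $ i) = m"
    by auto
  obtain j where "v $ j \<noteq> 0"
    using v(1) by (auto simp: Finite_Cartesian_Product.vec_eq_iff)
  then have "0 < m"
    using m_ge[of j] by (meson less_le_trans zero_less_norm_iff)
  have "cmod \<mu> * m = cmod (\<Sum>j\<in>UNIV. complex_of_real (G $ i $ j) * v $ j)"
    using arg_cong[OF v(2), of "\<lambda>x. cmod (x $ i)"] i
    by (simp add: norm_mult matrix_vector_mult_def cmat_def)
  also have "\<dots> \<le> (\<Sum>j\<in>UNIV. \<bar>G $ i $ j\<bar> * m)"
    by (rule order_trans[OF norm_sum sum_mono]) (simp add: norm_mult mult_left_mono m_ge)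
  also have "\<dots> = (\<Sum>j\<in>UNIV. \<bar>G $ i $ j\<bar>) * m"
    by (simp add: sum_distrib_right)
  finally have "cmod \<mu> \<le> (\<Sum>j\<in>UNIV. \<bar>G $ i $ j\<bar>)"
    using \<open>0 < m\<close> by simp
  also have "\<dots> \<le> (\<Sum>i\<in>UNIV. \<Sum>j\<in>UNIV. \<bar>G $ i $ j\<bar>)"
    by (rule member_le_sum) (auto intro: sum_nonneg)
  finally show ?thesis .
qed

lemma eigenvalue_norm_le_spectral_radius:
  assumes "\<mu> \<in> eigenvalues G"
  shows "cmod \<mu> \<le> spectral_radius G"
  unfolding Defs.spectral_radius_def
proof (rule cSup_upper)
  show "cmod \<mu> \<in> cmod ` eigenvalues G"
    using assms by simp
  show "bdd_above (cmod ` eigenvalues G)"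
    using eigenvalue_norm_le_abs_sum by (intro bdd_aboveI2) blast
qed

text \<open>The enumeration \<open>idx\<close> of the index type transfers Cartesian matrices to the matrices
  of the \<open>Jordan_Normal_Form\<close> library, whose spectral-radius bound on powers is used below.\<close>

definition mat_of_cart :: "(nat \<Rightarrow> 'n::finite) \<Rightarrow> 'a^'n^'n \<Rightarrow> 'a mat" where
  "mat_of_cart idx A = Matrix.mat CARD('n) CARD('n) (\<lambda>(i, j). A $ idx i $ idx j)"

lemma mat_of_cart_carrier: "mat_of_cart idx (A :: 'a^'n::finite^'n) \<in> carrier_mat CARD('n) CARD('n)"
  by (simp add: mat_of_cart_def)

lemma mat_of_cart_dim [simp]:
  "dim_row (mat_of_cart idx (A :: 'a^'n::finite^'n)) = CARD('n)"
  "dim_col (mat_of_cart idx (A :: 'a^'n::finite^'n)) = CARD('n)"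
  by (simp_all add: mat_of_cart_def)

lemma mat_of_cart_index:
  "i < CARD('n) \<Longrightarrow> j < CARD('n) \<Longrightarrow>
    mat_of_cart idx (A :: 'a^'n::finite^'n) $$ (i, j) = A $ idx i $ idx j"
  by (simp add: mat_of_cart_def)

context
  fixes idx :: "nat \<Rightarrow> 'n::finite"
  assumes idx: "bij_betw idx {0..<CARD('n)} UNIV"
begin

lemma mat_of_cart_mult:
  "mat_of_cart idx (A ** B) = mat_of_cart idx A * mat_of_cart idx (B :: 'a::comm_semiring_1^'n^'n)"
proof (rule eq_matI)
  fix i j
  assume "i < dim_row (mat_of_cart idx A * mat_of_cart idx B)"
    and "j < dim_col (mat_of_cart idx A * mat_of_cart idx B)"
  then have ij: "i < CARD('n)" "j < CARD('n)"
    by (simp_all add: mat_of_cart_def)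
  have "(mat_of_cart idx A * mat_of_cart idx B) $$ (i, j)
      = (\<Sum>l\<in>{0..<CARD('n)}. A $ idx i $ idx l * B $ idx l $ idx j)"
    using ij by (simp add: mat_of_cart_def scalar_prod_def)
  also have "\<dots> = (\<Sum>l\<in>UNIV. A $ idx i $ l * B $ l $ idx j)"
    by (rule sum.reindex_bij_betw[OF idx])
  finally show
    "mat_of_cart idx (A ** B) $$ (i, j) = (mat_of_cart idx A * mat_of_cart idx B) $$ (i, j)"
    using ij by (simp add: mat_of_cart_def matrix_matrix_mult_def)
qed (simp_all add: mat_of_cart_def)

lemma mat_of_cart_one: "mat_of_cart idx (mat 1 :: 'a::comm_semiring_1^'n^'n) = 1\<^sub>m CARD('n)"
proof (rule eq_matI)
  fix i j
  assume "i < dim_row (1\<^sub>m CARD('n) :: 'a mat)" "j < dim_col (1\<^sub>m CARD('n) :: 'a mat)"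
  moreover from this have "idx i = idx j \<longleftrightarrow> i = j"
    using idx unfolding bij_betw_def inj_on_def by auto
  ultimately show "mat_of_cart idx (mat 1 :: 'a^'n^'n) $$ (i, j) = 1\<^sub>m CARD('n) $$ (i, j)"
    by (simp add: mat_of_cart_index Finite_Cartesian_Product.mat_def)
qed (simp_all add: mat_of_cart_def)

lemma mat_of_cart_matpow:
  "mat_of_cart idx (matpow (A :: 'a::comm_semiring_1^'n^'n) k) = mat_of_cart idx A ^\<^sub>m k"
  by (induction k)
    (simp_all add: mat_of_cart_one matpow_Suc_right mat_of_cart_mult del: matpow.simps(2))

lemma mat_of_cart_eigenvalue:
  assumes "eigenvalue (mat_of_cart idx B) \<mu>"
  shows "\<exists>w. w \<noteq> 0 \<and> B *v w = \<mu> *s w"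
proof -
  obtain v where v: "v \<in> carrier_vec CARD('n)" "v \<noteq> 0\<^sub>v CARD('n)"
    "mat_of_cart idx B *\<^sub>v v = \<mu> \<cdot>\<^sub>v v"
    using assms unfolding eigenvalue_def eigenvector_def by auto
  define pos where "pos = inv_into {0..<CARD('n)} idx"
  have idx_pos: "idx (pos x) = x" and pos_lt: "pos x < CARD('n)" for x
    using bij_betw_inv_into_right[OF idx] bij_betw_inv_into[OF idx] unfolding pos_def bij_betw_def
    by auto
  have pos_idx: "i < CARD('n) \<Longrightarrow> pos (idx i) = i" for i
    unfolding pos_def by (rule bij_betw_inv_into_left[OF idx]) simp
  define w where "w = (\<chi> x. vec_index v (pos x))"
  obtain i where i: "i < CARD('n)" "vec_index v i \<noteq> 0"
    using v(1,2) by (metis carrier_vecD eq_vecI index_zero_vec(1,2))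
  then have "w $ idx i \<noteq> 0"
    by (simp add: w_def pos_idx)
  then have "w \<noteq> 0"
    by auto
  moreover have "(B *v w) $ x = (\<mu> *s w) $ x" for x
  proof -
    have "(B *v w) $ x = (\<Sum>l\<in>{0..<CARD('n)}. B $ x $ idx l * w $ idx l)"
      unfolding matrix_vector_mult_def by (simp add: sum.reindex_bij_betw[OF idx, symmetric])
    also have "\<dots> = vec_index (mat_of_cart idx B *\<^sub>v v) (pos x)"
      using pos_lt[of x] v(1) by (simp add: scalar_prod_def mat_of_cart_index idx_pos w_def pos_idx)
    also have "\<dots> = \<mu> * w $ x"
      using pos_lt[of x] v(1) by (simp add: v(3) w_def)
    finally show ?thesis
      by simp
  qed
  ultimately show ?thesis
    by (auto simp: Finite_Cartesian_Product.vec_eq_iff)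
qed

end

lemma matpow_bounded_if_eigenvalues_lt_1:
  fixes R :: "real^'n^'n"
  assumes "\<And>\<mu>. \<mu> \<in> eigenvalues R \<Longrightarrow> cmod \<mu> < 1"
  obtains c where "\<And>k i j. \<bar>matpow R k $ i $ j\<bar> \<le> c"
proof -
  obtain idx :: "nat \<Rightarrow> 'n" where idx: "bij_betw idx {0..<CARD('n)} UNIV"
    using ex_bij_betw_nat_finite[of "UNIV :: 'n set"] by auto
  define J where "J = mat_of_cart idx (cmat R)"
  have J: "J \<in> carrier_mat CARD('n) CARD('n)"
    unfolding J_def by (rule mat_of_cart_carrier)
  have "cmod \<mu> < 1" if "\<mu> \<in> spectrum J" for \<mu>
    using that mat_of_cart_eigenvalue[OF idx] assms
    unfolding spectrum_def J_def eigenvalues_def by blast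
  then have "Spectral_Radius.spectral_radius J < 1"
    unfolding Spectral_Radius.spectral_radius_def
    using card_finite_spectrum(1)[OF J] spectrum_non_empty[OF J] by (subst Max_less_iff) auto
  then obtain c where c: "\<And>k. norm_bound (J ^\<^sub>m k) c"
    using spectral_radius_jnf_norm_bound_less_1_upper_triangular[OF J] by blast
  have "\<bar>matpow R k $ i $ j\<bar> \<le> c" for k i j
  proof -
    have "x \<in> idx ` {0..<CARD('n)}" for x
      using idx by (simp add: bij_betw_def)
    then obtain a b where ab: "a < CARD('n)" "b < CARD('n)" "i = idx a" "j = idx b"
      by (meson atLeastLessThan_iff imageE)
    have "J ^\<^sub>m k = mat_of_cart idx (cmat (matpow R k))"
      unfolding J_def cmat_matpow mat_of_cart_matpow[OF idx] ..
    then have "(J ^\<^sub>m k) $$ (a, b) = complex_of_real (matpow R k $ i $ j)"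
      using ab by (simp add: mat_of_cart_index cmat_def)
    then show ?thesis
      using c[of k] ab J unfolding norm_bound_def by (metis norm_of_real pow_mat_dim_square)
  qed
  then show thesis
    by (rule that)
qed

lemma exp_stable_scaleR_if_matpow_bounded:
  fixes R :: "real^'n^'n"
  assumes bounded: "\<And>k i j. \<bar>matpow R k $ i $ j\<bar> \<le> b" and q: "0 \<le> q" "q < 1"
  shows "exp_stable (q *\<^sub>R R)"
proof -
  define n where "n = real CARD('n)"
  have "\<bar>matpow (q *\<^sub>R R) k $ i $ j\<bar> \<le> q ^ k * b" for k i j
    using bounded[of k i j] q by (simp add: matpow_scaleR abs_mult mult_left_mono)
  then have onorm_bound: "onorm ((*v) (matpow (q *\<^sub>R R) k)) \<le> n * n * (q ^ k * b)" for k
    unfolding n_def by (rule onorm_le_matrix_component)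
  have "norm (matpow (q *\<^sub>R R) k *v v) \<le> (n * n * b) * q ^ k * norm v" for k v
  proof -
    have "norm (matpow (q *\<^sub>R R) k *v v) \<le> onorm ((*v) (matpow (q *\<^sub>R R) k)) * norm v"
      by (rule onorm[OF matrix_vector_mul_bounded_linear])
    also have "\<dots> \<le> n * n * (q ^ k * b) * norm v"
      by (rule mult_right_mono[OF onorm_bound norm_ge_zero])
    finally show ?thesis
      by (simp add: mult_ac)
  qed
  moreover have "0 \<le> b"
    using bounded[of 0] by (meson abs_ge_zero order_trans)
  then have "0 \<le> n * n * b"
    by (simp add: n_def)
  ultimately show ?thesis
    unfolding exp_stable_def using q by blast
qed

lemma exp_stable_scaleR:
  fixes G :: "real^'n^'n"
  assumes "spectral_radius G \<le> \<Lambda>" "0 \<le> \<Lambda>" "0 < c" "c * \<Lambda> < 1"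
  shows "exp_stable (c *\<^sub>R G)"
proof -
  \<comment> \<open>Rescaling by \<open>c / q\<close> with \<open>c \<Lambda> < q < 1\<close> moves the spectrum strictly inside the unit disc.\<close>
  define q where "q = (1 + c * \<Lambda>) / 2"
  have "0 \<le> c * \<Lambda>"
    using assms(2,3) by simp
  then have q: "0 < q" "q < 1" "c * \<Lambda> < q"
    using assms(4) unfolding q_def by (auto simp: mult.commute)
  define R where "R = (c / q) *\<^sub>R G"
  have "cmod \<mu> < 1" if "\<mu> \<in> eigenvalues R" for \<mu>
  proof -
    have "cmod (\<mu> / complex_of_real (c / q)) \<le> \<Lambda>"
      using eigenvalues_scaleR[of \<mu> "c / q" G] that q assms(1,3)
      by (auto simp: R_def intro: order_trans[OF eigenvalue_norm_le_spectral_radius])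
    then have "q * cmod \<mu> \<le> c * \<Lambda>"
      using q assms(3) by (simp add: norm_divide norm_mult field_simps)
    then show ?thesis
      using q by (metis mult.right_neutral mult_less_cancel_left_pos order_le_less_trans)
  qed
  then obtain b where "\<And>k i j. \<bar>matpow R k $ i $ j\<bar> \<le> b"
    using matpow_bounded_if_eigenvalues_lt_1 by blast
  moreover have "c *\<^sub>R G = q *\<^sub>R R"
    using q by (simp add: R_def)
  ultimately show ?thesis
    using exp_stable_scaleR_if_matpow_bounded q by (metis less_imp_le)
qed

section \<open>The consumption dynamics\<close>

lemma traj_swap: "traj G \<alpha> p \<beta> su sb k = prod.swap (traj G \<alpha> p \<beta> sb su k)"
  by (induction k) (simp_all add: Let_def)

lemma Uund_eq_Ubar_swap: "Uund G \<alpha> p \<beta> \<delta> sb su = Ubar G \<alpha> p \<beta> \<delta> su sb"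
  unfolding Uund_def Ubar_def xund_def xbar_def by (simp add: traj_swap[of G \<alpha> p \<beta> sb su])

lemma xbar_Suc:
  "xbar G \<alpha> p \<beta> sb su (Suc k) =
     (\<alpha> - p) *\<^sub>R ones + G *v xbar G \<alpha> p \<beta> sb su k + \<beta> *\<^sub>R (G *v xund G \<alpha> p \<beta> sb su k)"
  by (simp add: xbar_def xund_def Let_def)

lemma xund_Suc:
  "xund G \<alpha> p \<beta> sb su (Suc k) =
     (\<alpha> - p) *\<^sub>R ones + G *v xund G \<alpha> p \<beta> sb su k + \<beta> *\<^sub>R (G *v xbar G \<alpha> p \<beta> sb su k)"
  by (simp add: xbar_def xund_def Let_def)

lemma discounted_sum_Suc:
  "\<delta> ^ Suc k *\<^sub>R (xbar G \<alpha> p \<beta> sb su (Suc k) + xund G \<alpha> p \<beta> sb su (Suc k)) =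
     (2 * (\<alpha> - p) * \<delta> ^ Suc k) *\<^sub>R ones
     + ((\<delta> * (1 + \<beta>)) *\<^sub>R G) *v (\<delta> ^ k *\<^sub>R (xbar G \<alpha> p \<beta> sb su k + xund G \<alpha> p \<beta> sb su k))"
  by (simp add: xbar_Suc xund_Suc scaleR_matrix_vector_assoc[symmetric] algebra_simps)
    (simp add: Finite_Cartesian_Product.vec_eq_iff algebra_simps)

lemma discounted_diff_Suc:
  "\<delta> ^ Suc k *\<^sub>R (xbar G \<alpha> p \<beta> sb su (Suc k) - xund G \<alpha> p \<beta> sb su (Suc k)) =
     ((\<delta> * (1 - \<beta>)) *\<^sub>R G) *v (\<delta> ^ k *\<^sub>R (xbar G \<alpha> p \<beta> sb su k - xund G \<alpha> p \<beta> sb su k))"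
  by (simp add: xbar_Suc xund_Suc scaleR_matrix_vector_assoc[symmetric] algebra_simps)

lemma discounted_xbar_split:
  fixes G :: "real^'n^'n" and \<delta> \<beta> :: real
  defines "Mplus \<equiv> (\<delta> * (1 + \<beta>)) *\<^sub>R G" and "Mminus \<equiv> (\<delta> * (1 - \<beta>)) *\<^sub>R G"
  shows "\<delta> ^ k *\<^sub>R xbar G \<alpha> p \<beta> sb su k = (1/2) *\<^sub>R
           (matpow Mplus k *v (sb + su) + matpow Mminus k *v (sb - su)
            + \<delta> ^ k *\<^sub>R (xbar G \<alpha> p \<beta> 0 0 k + xund G \<alpha> p \<beta> 0 0 k))"
proof -
  define z where "z sb su k = \<delta> ^ k *\<^sub>R (xbar G \<alpha> p \<beta> sb su k + xund G \<alpha> p \<beta> sb su k)" for sb su k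
  define w where "w sb su k = \<delta> ^ k *\<^sub>R (xbar G \<alpha> p \<beta> sb su k - xund G \<alpha> p \<beta> sb su k)" for sb su k
  define b where "b k = (2 * (\<alpha> - p) * \<delta> ^ Suc k) *\<^sub>R (ones :: real^'n)" for k
  have z_rec: "z sb su (Suc k) = b k + Mplus *v z sb su k" for sb su k
    unfolding z_def b_def Mplus_def by (rule discounted_sum_Suc)
  have w_rec: "w sb su (Suc k) = 0 + Mminus *v w sb su k" for sb su k
    unfolding w_def Mminus_def using discounted_diff_Suc by simp
  \<comment> \<open>The seeds enter only through the homogeneous part; \<open>z 0 0\<close> is the forced part.\<close>
  have z_eq: "z sb su k = matpow Mplus k *v (sb + su) + z 0 0 k"
    using linear_recurrence_closed_form[of "z sb su" b Mplus k, OF z_rec]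
      linear_recurrence_closed_form[of "z 0 0" b Mplus k, OF z_rec]
    by (simp add: z_def xbar_def xund_def)
  have w_eq: "w sb su k = matpow Mminus k *v (sb - su)"
    using linear_recurrence_closed_form[of "w sb su" "\<lambda>_. 0" Mminus k, OF w_rec]
    by (simp add: w_def xbar_def xund_def)
  have "\<delta> ^ k *\<^sub>R xbar G \<alpha> p \<beta> sb su k = (1/2) *\<^sub>R (z sb su k + w sb su k)"
    by (simp add: z_def w_def Finite_Cartesian_Product.vec_eq_iff algebra_simps)
  then show ?thesis
    unfolding z_eq w_eq by (simp add: z_def add_ac)
qed

lemma discounted_forced_summable:
  fixes G :: "real^'n^'n"
  assumes "exp_stable ((\<delta> * (1 + \<beta>)) *\<^sub>R G)" and "0 \<le> \<delta>" "\<delta> < 1"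
  shows "summable (\<lambda>k. ones \<bullet> (\<delta> ^ k *\<^sub>R (xbar G \<alpha> p \<beta> 0 0 k + xund G \<alpha> p \<beta> 0 0 k)))"
proof -
  define z where "z k = \<delta> ^ k *\<^sub>R (xbar G \<alpha> p \<beta> 0 0 k + xund G \<alpha> p \<beta> 0 0 k)" for k
  have rec: "z (Suc k) = (2 * (\<alpha> - p) * \<delta> ^ Suc k) *\<^sub>R ones + ((\<delta> * (1 + \<beta>)) *\<^sub>R G) *v z k" for k
    unfolding z_def by (rule discounted_sum_Suc)
  have "summable (\<lambda>k. norm (z k))"
    using assms(2,3)
    by (intro exp_stable_forced_summable[where z = z and d = \<delta>
          and B = "\<bar>2 * (\<alpha> - p)\<bar> * norm (ones :: real^'n)", OF assms(1) rec])
      (simp_all add: abs_mult mult_ac)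
  then have "summable (\<lambda>k. norm (ones :: real^'n) * norm (z k))"
    by (rule summable_mult)
  then show ?thesis
    unfolding z_def[symmetric] by (rule summable_comparison_test') (simp add: Cauchy_Schwarz_ineq2)
qed

lemma discounted_consumption_sums:
  fixes G :: "real^'n^'n"
  assumes stable_plus: "exp_stable ((\<delta> * (1 + \<beta>)) *\<^sub>R G)"
    and stable_minus: "exp_stable ((\<delta> * (1 - \<beta>)) *\<^sub>R G)"
    and \<delta>: "0 \<le> \<delta>" "\<delta> < 1"
  obtains a K where
    "\<And>sb su. (\<lambda>k. \<delta> ^ k * (ones \<bullet> xbar G \<alpha> p \<beta> sb su k)) sums (cvec G \<beta> \<delta> \<bullet> sb + a \<bullet> su + K)"
proof -
  define yplus where "yplus = matrix_inv (mat 1 - transpose ((\<delta> * (1 + \<beta>)) *\<^sub>R G)) *v ones"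
  define yminus where "yminus = matrix_inv (mat 1 - transpose ((\<delta> * (1 - \<beta>)) *\<^sub>R G)) *v ones"
  obtain F where F: "(\<lambda>k. ones \<bullet> (\<delta> ^ k *\<^sub>R (xbar G \<alpha> p \<beta> 0 0 k + xund G \<alpha> p \<beta> 0 0 k))) sums F"
    using discounted_forced_summable[OF stable_plus \<delta>] by (auto simp: summable_def)
  have split: "\<delta> ^ k * (ones \<bullet> xbar G \<alpha> p \<beta> sb su k)
      = 1/2 * (ones \<bullet> (matpow ((\<delta> * (1 + \<beta>)) *\<^sub>R G) k *v (sb + su)))
        + 1/2 * (ones \<bullet> (matpow ((\<delta> * (1 - \<beta>)) *\<^sub>R G) k *v (sb - su)))
        + 1/2 * (ones \<bullet> (\<delta> ^ k *\<^sub>R (xbar G \<alpha> p \<beta> 0 0 k + xund G \<alpha> p \<beta> 0 0 k)))"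
    for sb su k
    unfolding inner_scaleR_right[symmetric] discounted_xbar_split by (simp add: inner_add_right)
  have "(\<lambda>k. \<delta> ^ k * (ones \<bullet> xbar G \<alpha> p \<beta> sb su k)) sums
          (1/2 * (yplus \<bullet> (sb + su)) + 1/2 * (yminus \<bullet> (sb - su)) + 1/2 * F)" for sb su
    unfolding split yplus_def yminus_def
    using sums_mult[OF exp_stable_neumann_sums[OF stable_plus]]
      sums_mult[OF exp_stable_neumann_sums[OF stable_minus]] sums_mult[OF F]
    by (intro sums_add) blast+
  moreover have "cvec G \<beta> \<delta> = (1/2) *\<^sub>R yplus + (1/2) *\<^sub>R yminus"
    by (simp add: cvec_def yplus_def yminus_def transpose_scalar)
  ultimately show thesis
    by (intro that[of "(1/2) *\<^sub>R yplus - (1/2) *\<^sub>R yminus" "F / 2"])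
      (simp add: inner_add_right inner_diff_right inner_add_left inner_diff_left algebra_simps)
qed

lemma Ubar_partial_derivative:
  fixes G :: "real^'n^'n"
  assumes "exp_stable ((\<delta> * (1 + \<beta>)) *\<^sub>R G)" "exp_stable ((\<delta> * (1 - \<beta>)) *\<^sub>R G)"
    and "0 \<le> \<delta>" "\<delta> < 1"
  shows "((\<lambda>t. Ubar G \<alpha> p \<beta> \<delta> (sb + t *\<^sub>R axis i 1) su)
           has_real_derivative (p * cvec G \<beta> \<delta> $ i - sb $ i)) (at 0)"
proof -
  obtain a K where sums:
    "\<And>sb su. (\<lambda>k. \<delta> ^ k * (ones \<bullet> xbar G \<alpha> p \<beta> sb su k)) sums (cvec G \<beta> \<delta> \<bullet> sb + a \<bullet> su + K)"
    using discounted_consumption_sums[OF assms] by blast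
  define c where "c = cvec G \<beta> \<delta>"
  have "Ubar G \<alpha> p \<beta> \<delta> (sb + t *\<^sub>R axis i 1) su
      = p * (c \<bullet> sb + a \<bullet> su + K) - (norm sb)\<^sup>2 / 2 + t * (p * c $ i - sb $ i) - t\<^sup>2 / 2" for t
  proof -
    have "(norm (sb + t *\<^sub>R axis i 1))\<^sup>2 = (norm sb)\<^sup>2 + 2 * t * sb $ i + t\<^sup>2"
      unfolding power2_norm_eq_inner
      by (simp add: inner_add_left inner_add_right inner_axis inner_axis' inner_axis_axis
          power2_eq_square algebra_simps)
    then show ?thesis
      unfolding Ubar_def sums_unique[OF sums, symmetric] c_def
      by (simp add: inner_add_right inner_axis algebra_simps power2_eq_square)
  qed
  then have "(\<lambda>t. Ubar G \<alpha> p \<beta> \<delta> (sb + t *\<^sub>R axis i 1) su)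
      = (\<lambda>t. p * (c \<bullet> sb + a \<bullet> su + K) - (norm sb)\<^sup>2 / 2 + t * (p * c $ i - sb $ i) - t\<^sup>2 / 2)"
    by (rule ext)
  then show ?thesis
    unfolding c_def by (auto intro!: derivative_eq_intros)
qed

theorem lemma1:
  fixes G :: "real^'n^'n" and \<alpha> p \<beta> \<delta> \<Lambda>max :: real and sb su :: "real^'n"
  assumes "\<forall>i j. G $ i $ j \<ge> 0"
    and "\<alpha> \<ge> p"
    and "0 \<le> \<beta>" and "\<beta> < 1"
    and "0 < \<delta>" and "\<delta> < 1"
    and "spectral_radius G \<le> \<Lambda>max"
    and "0 < \<Lambda>max" and "\<Lambda>max < 1 / (\<delta> * (1 + \<beta>))"
    and "\<forall>i. sb $ i \<ge> 0" and "\<forall>i. su $ i \<ge> 0"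
  shows "\<forall>i. ((\<lambda>t. Ubar G \<alpha> p \<beta> \<delta> (sb + t *\<^sub>R axis i 1) su)
                 has_real_derivative (p * cvec G \<beta> \<delta> $ i - sb $ i)) (at 0)
           \<and> ((\<lambda>t. Uund G \<alpha> p \<beta> \<delta> sb (su + t *\<^sub>R axis i 1))
                 has_real_derivative (p * cvec G \<beta> \<delta> $ i - su $ i)) (at 0)"
proof -
  have plus: "\<delta> * (1 + \<beta>) * \<Lambda>max < 1"
    using assms(3,5,9) by (simp add: less_divide_eq mult.commute)
  have "\<delta> * (1 - \<beta>) * \<Lambda>max \<le> \<delta> * (1 + \<beta>) * \<Lambda>max"
    using assms(3,5,8) by (intro mult_right_mono) auto
  with plus have minus: "\<delta> * (1 - \<beta>) * \<Lambda>max < 1"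
    by linarith
  have "exp_stable ((\<delta> * (1 + \<beta>)) *\<^sub>R G)" "exp_stable ((\<delta> * (1 - \<beta>)) *\<^sub>R G)"
    using exp_stable_scaleR[OF assms(7) _ _ plus] exp_stable_scaleR[OF assms(7) _ _ minus]
      assms(3-5,8)
    by simp_all
  from Ubar_partial_derivative[OF this less_imp_le[OF assms(5)] assms(6)] show ?thesis
    by (simp add: Uund_eq_Ubar_swap)
qed

end
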